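(* Let $0<r<1$. For every $w\in\overline{\mathbb{A}}_r$, the $2\times 2$ matrix $$T_w=\begin{pmatrix} w & (1-|w|^2)(|w|^2-r^2)\\ 0 & w\end{pmatrix}$$ is an $\mathbb{A}_r$-contraction; moreover, for $w\in\partial\mathbb{A}_r$ it is an $\mathbb{A}_r$-unitary. In addition, for every $w\in\mathbb{A}_r$, $$\hat K_r(\overline{w},w)=\sum_{n=-\infty}^{\infty}\frac{|w|^{2n}}{1+r^{2n}}\le\frac{1}{(1-|w|^2)(|w|^2-r^2)}.$$
   Context: $\mathbb{A}_r=\{z: r<|z|<1\}$, $\partial\mathbb{A}_r=\mathbb{T}\cup r\mathbb{T}$. An $\mathbb{A}_r$-contraction is an operator (here a matrix) $T$ with $\sigma(T)\subseteq\overline{\mathbb{A}}_r$ and $\|f(T)\|\le\sup_{\overline{\mathbb{A}}_r}|f|$ for every rational function $f$ with poles off $\overline{\mathbb{A}}_r$. An $\mathbb{A}_r$-unitary is a normal operator with spectrum in $\partial\mathbb{A}_r$. $\hat K_r(z,w)=\sum_{n\in\mathbb{Z}}\frac{(z\overline{w})^n}{1+r^{2n}}$ is the reproducing kernel of the Hardy space $H^2(\partial\mathbb{A}_r)$ with inner product $\langle f,g\rangle=\frac{1}{2\pi}\int_0^{2\pi}f(e^{it})\overline{g(e^{it})}dt+\frac{1}{2\pi}\int_0^{2\pi}f(re^{it})\overline{g(re^{it})}dt$. *)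

theory Defs
  imports "HOL-Analysis.Analysis" "HOL-Computational_Algebra.Polynomial"
begin

definition annulus :: "real \<Rightarrow> complex set" where
  "annulus r = {z. r < cmod z \<and> cmod z < 1}"
definition cl_annulus :: "real \<Rightarrow> complex set" where
  "cl_annulus r = {z. r \<le> cmod z \<and> cmod z \<le> 1}"
definition bd_annulus :: "real \<Rightarrow> complex set" where
  "bd_annulus r = {z. cmod z = 1 \<or> cmod z = r}"

primrec mpow :: "complex^'n^'n \<Rightarrow> nat \<Rightarrow> complex^'n^'n" where
  "mpow A 0 = mat 1"
| "mpow A (Suc k) = A ** mpow A k"

definition poly_mat :: "complex poly \<Rightarrow> complex^'n^'n \<Rightarrow> complex^'n^'n" where
  "poly_mat p A = (\<Sum>i\<le>degree p. mat (coeff p i) ** mpow A i)"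

definition op_norm :: "complex^'n^'n \<Rightarrow> real" where
  "op_norm A = onorm (\<lambda>x. A *v x)"

definition mspectrum :: "complex^'n^'n \<Rightarrow> complex set" where
  "mspectrum A = {c. \<not> invertible (A - mat c)}"

definition madjoint :: "complex^'n^'n \<Rightarrow> complex^'n^'n" where
  "madjoint A = (\<chi> i j. cnj (A $ j $ i))"

text \<open>A rational function f = p/q with no poles on the closed annulus is represented
  by polynomials p, q with q zero-free on the closed annulus; f(T) = p(T) q(T)^{-1}.\<close>
definition annulus_contraction :: "real \<Rightarrow> complex^'n^'n \<Rightarrow> bool" where
  "annulus_contraction r T \<longleftrightarrow>
     mspectrum T \<subseteq> cl_annulus r \<and>
     (\<forall>p q. (\<forall>z\<in>cl_annulus r. poly q z \<noteq> 0) \<longrightarrow>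
        op_norm (poly_mat p T ** matrix_inv (poly_mat q T))
          \<le> (SUP z\<in>cl_annulus r. cmod (poly p z / poly q z)))"

definition annulus_unitary :: "real \<Rightarrow> complex^'n^'n \<Rightarrow> bool" where
  "annulus_unitary r T \<longleftrightarrow>
     T ** madjoint T = madjoint T ** T \<and> mspectrum T \<subseteq> bd_annulus r"

definition Tw :: "real \<Rightarrow> complex \<Rightarrow> complex^2^2" where
  "Tw r w = vector [vector [w, complex_of_real ((1 - (cmod w)\<^sup>2) * ((cmod w)\<^sup>2 - r\<^sup>2))],
                    vector [0, w]]"

end

theory Submission
  imports Defs "HOL-Complex_Analysis.Riemann_Mapping"
begin

text \<open>
  A function of the upper triangular matrix \<open>T\<^sub>w = [[w, c], [0, w]]\<close> is
  \<open>f(T\<^sub>w) = [[f(w), c f'(w)], [0, f(w)]]\<close>, and a matrix \<open>[[a, b], [0, a]]\<close> has norm at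
  most \<open>M\<close> as soon as \<open>|a| \<le> M\<close> and \<open>|b| M \<le> M\<^sup>2 - |a|\<^sup>2\<close>. With
  \<open>c = (1 - |w|\<^sup>2)(|w|\<^sup>2 - r\<^sup>2)\<close> the latter is a Schwarz--Pick estimate for \<open>f\<close> on
  the annulus, obtained from the Schwarz--Pick lemma on a disc of radius \<open>(1 - r)/2\<close>
  inside the annulus through \<open>w\<close>. On the boundary \<open>c = 0\<close>, so \<open>T\<^sub>w = w I\<close> is normal.
  The kernel bound follows by comparing the terms with the geometric series in \<open>|w|\<^sup>2\<close>
  and \<open>r\<^sup>2/|w|\<^sup>2\<close>, whose sum is \<open>|w|\<^sup>2 (1 - r\<^sup>2) / ((1 - |w|\<^sup>2)(|w|\<^sup>2 - r\<^sup>2))\<close>.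
\<close>

lemma le_of_le_at_right:
  fixes f g :: "real \<Rightarrow> real"
  assumes "isCont f x" "isCont g x" "\<And>t. x < t \<Longrightarrow> f t \<le> g t"
  shows "f x \<le> g x"
proof (rule tendsto_le[OF trivial_limit_at_right_real])
  show "(g \<longlongrightarrow> g x) (at_right x)" "(f \<longlongrightarrow> f x) (at_right x)"
    using assms(1,2) by (auto simp: isCont_def intro: tendsto_mono[OF at_within_le_at])
  show "\<forall>\<^sub>F t in at_right x. f t \<le> g t"
    using assms(3) by (auto simp: eventually_at_right_less intro: eventually_mono[OF eventually_at_right_less])
qed

lemma poly_pderiv_eq_sum:
  fixes w :: "'a::real_normed_field"
  shows "poly (pderiv p) w = (\<Sum>i\<le>degree p. coeff p i * (of_nat i * w ^ (i - 1)))"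
proof -
  have "poly p = (\<lambda>z. \<Sum>i\<le>degree p. coeff p i * z ^ i)"
    by (rule ext) (rule poly_altdef)
  moreover have "((\<lambda>z. \<Sum>i\<le>degree p. coeff p i * z ^ i) has_field_derivative
      (\<Sum>i\<le>degree p. coeff p i * (of_nat i * w ^ (i - 1)))) (at w)"
    by (intro DERIV_sum DERIV_cmult) (use DERIV_power[OF DERIV_ident] in simp)
  ultimately show ?thesis
    using poly_DERIV[of p w] by (metis DERIV_unique)
qed

lemma Moebius_function_has_field_derivative:
  assumes "1 - cnj w * z \<noteq> 0"
  shows "(Moebius_function 0 w has_field_derivative (1 - cnj w * w) / (1 - cnj w * z)\<^sup>2) (at z)"
proof -
  have "((\<lambda>z. (z - w) / (1 - cnj w * z)) has_field_derivative
     (1 * (1 - cnj w * z) - (z - w) * (0 - cnj w * 1)) / ((1 - cnj w * z) * (1 - cnj w * z))) (at z)"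
    by (intro DERIV_divide derivative_eq_intros assms) auto
  then show ?thesis
    by (simp add: Moebius_function_simple[abs_def] power2_eq_square algebra_simps)
qed

lemma Schwarz_Pick_derivative:
  fixes g :: "complex \<Rightarrow> complex"
  assumes holg: "g holomorphic_on ball 0 1" and lt: "\<And>z. norm z < 1 \<Longrightarrow> norm (g z) < 1"
    and a: "norm a < 1" and D: "(g has_field_derivative D) (at a)"
  shows "norm D * (1 - (norm a)\<^sup>2) \<le> 1 - (norm (g a))\<^sup>2"
proof -
  define b where "b = g a"
  have b: "norm b < 1" using lt a by (simp add: b_def)
  have ca: "cnj a * a = of_real ((norm a)\<^sup>2)" and cb: "cnj b * b = of_real ((norm b)\<^sup>2)"
    by (simp_all add: mult.commute flip: complex_norm_square)
  have pa: "0 < 1 - (norm a)\<^sup>2" and pb: "0 < 1 - (norm b)\<^sup>2"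
    using a b by (simp_all add: abs_square_less_1)
  \<comment> \<open>Compose with the disc automorphisms \<open>0 \<mapsto> a\<close> and \<open>g a \<mapsto> 0\<close> and apply the Schwarz lemma.\<close>
  define m1 where "m1 = Moebius_function 0 (- a)"
  define m2 where "m2 = Moebius_function 0 b"
  define h where "h = m2 \<circ> (g \<circ> m1)"
  have m1_lt: "norm (m1 z) < 1" if "norm z < 1" for z
    using Moebius_function_norm_lt_1[of "- a" z 0] a that by (simp add: m1_def)
  have holh: "h holomorphic_on ball 0 1"
    unfolding h_def
  proof (rule holomorphic_on_compose_gen[where t = "ball 0 1"])
    show "g \<circ> m1 holomorphic_on ball 0 1"
      by (rule holomorphic_on_compose_gen[where t = "ball 0 1"])
        (use holg m1_lt a Moebius_function_holomorphic[of "- a" 0] in \<open>auto simp: m1_def\<close>)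
    show "m2 holomorphic_on ball 0 1" using Moebius_function_holomorphic[OF b] m2_def by simp
    show "(g \<circ> m1) ` ball 0 1 \<subseteq> ball 0 1" using m1_lt lt by auto
  qed
  have m1_0: "m1 0 = a" by (simp add: m1_def Moebius_function_of_zero)
  have h0: "h 0 = 0" by (simp add: h_def m1_0 m2_def b_def Moebius_function_eq_zero)
  have h_lt: "norm (h z) < 1" if "norm z < 1" for z
    using Moebius_function_norm_lt_1[OF b, of "g (m1 z)" 0] lt m1_lt that by (simp add: h_def m2_def)
  have Schwarz: "norm (deriv h 0) \<le> 1"
    using Schwarz_Lemma(2)[OF holh h0 h_lt, of 0] by simp
  have "(m1 has_field_derivative 1 - cnj a * a) (at 0)"
    using Moebius_function_has_field_derivative[of "- a" 0] by (simp add: m1_def)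
  moreover have "(m2 has_field_derivative 1 / (1 - cnj b * b)) (at (g (m1 0)))"
  proof -
    have "1 - cnj b * b = of_real (1 - (norm b)\<^sup>2)" by (simp add: cb)
    moreover have "of_real (1 - (norm b)\<^sup>2) \<noteq> (0::complex)"
      using pb by (subst of_real_eq_0_iff) linarith
    ultimately have "1 - cnj b * b \<noteq> 0" by simp
    then show ?thesis
      using Moebius_function_has_field_derivative[of b b]
      by (simp add: m2_def m1_0 power2_eq_square flip: b_def)
  qed
  ultimately have "(h has_field_derivative 1 / (1 - cnj b * b) * (D * (1 - cnj a * a))) (at 0)"
    unfolding h_def using D m1_0 by (intro DERIV_chain) (auto intro: DERIV_chain)
  then have "deriv h 0 = D * of_real (1 - (norm a)\<^sup>2) / of_real (1 - (norm b)\<^sup>2)"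
    by (simp add: DERIV_imp_deriv ca cb)
  then have "norm (deriv h 0) = norm D * (1 - (norm a)\<^sup>2) / (1 - (norm b)\<^sup>2)"
    using pa pb by (simp only: norm_divide norm_mult norm_of_real) simp
  with Schwarz pb show ?thesis by (simp add: b_def divide_le_eq)
qed

lemma Schwarz_Pick_derivative_ball:
  fixes f :: "complex \<Rightarrow> complex"
  assumes holf: "f holomorphic_on ball c \<rho>" and bound: "\<And>z. z \<in> ball c \<rho> \<Longrightarrow> norm (f z) \<le> M"
    and w: "w \<in> ball c \<rho>" and F: "(f has_field_derivative F) (at w)"
  shows "norm F * (\<rho>\<^sup>2 - (dist c w)\<^sup>2) * M \<le> \<rho> * (M\<^sup>2 - (norm (f w))\<^sup>2)"
proof -
  have \<rho>: "0 < \<rho>" using w by (metis mem_ball zero_le_dist le_less_trans)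
  have M: "0 \<le> M" using bound[OF w] norm_ge_zero order_trans by blast
  define a where "a = (w - c) / of_real \<rho>"
  have a: "norm a < 1" using w \<rho> by (simp add: a_def norm_divide dist_norm norm_minus_commute)
  have wa: "c + of_real \<rho> * a = w" using \<rho> by (simp add: a_def)
  have na: "1 - (norm a)\<^sup>2 = (\<rho>\<^sup>2 - (dist c w)\<^sup>2) / \<rho>\<^sup>2"
    using \<rho> by (simp add: a_def norm_divide dist_norm norm_minus_commute power_divide field_simps)
  have in_ball: "c + of_real \<rho> * u \<in> ball c \<rho>" if "norm u < 1" for u
    using that \<rho> by (simp add: dist_norm norm_mult)
  \<comment> \<open>Schwarz--Pick needs a strict bound: rescale by any \<open>M' > M\<close> and let \<open>M'\<close> tend to \<open>M\<close>.\<close>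
  show ?thesis
  proof (rule le_of_le_at_right[where f = "\<lambda>M. norm F * (\<rho>\<^sup>2 - (dist c w)\<^sup>2) * M"
        and g = "\<lambda>M. \<rho> * (M\<^sup>2 - (norm (f w))\<^sup>2)"])
    fix M' assume "M < M'"
    with M have M': "0 < M'" by simp
    define g where "g u = f (c + of_real \<rho> * u) / of_real M'" for u
    have "(f \<circ> (\<lambda>u. c + of_real \<rho> * u)) holomorphic_on ball 0 1"
      by (rule holomorphic_on_compose_gen[OF _ holf]) (auto intro!: holomorphic_intros in_ball)
    then have holg: "g holomorphic_on ball 0 1"
      unfolding g_def[abs_def] using M' by (intro holomorphic_intros) (auto simp: o_def)
    have g_lt: "norm (g u) < 1" if "norm u < 1" for u
      using bound[OF in_ball[OF that]] \<open>M < M'\<close> M' by (simp add: g_def norm_divide)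
    have "((\<lambda>u. c + of_real \<rho> * u) has_field_derivative of_real \<rho>) (at a)"
      by (auto intro!: derivative_eq_intros)
    then have "(g has_field_derivative F * of_real \<rho> / of_real M') (at a)"
      unfolding g_def[abs_def] using F wa by (intro DERIV_cdivide DERIV_chain') auto
    from Schwarz_Pick_derivative[OF holg _ a this] g_lt
    have "norm F * \<rho> / M' * (1 - (norm a)\<^sup>2) \<le> 1 - (norm (f w) / M')\<^sup>2"
      using \<rho> M' wa by (simp add: g_def norm_mult norm_divide)
    then have "M' * \<rho> * (norm F * (\<rho>\<^sup>2 - (dist c w)\<^sup>2) * M')
        \<le> M' * \<rho> * (\<rho> * (M'\<^sup>2 - (norm (f w))\<^sup>2))"
      using \<rho> M' unfolding na by (simp add: power2_eq_square field_simps)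
    then show "norm F * (\<rho>\<^sup>2 - (dist c w)\<^sup>2) * M' \<le> \<rho> * (M'\<^sup>2 - (norm (f w))\<^sup>2)"
      by (rule mult_left_le_imp_le) (use \<rho> M' in simp)
  qed (intro continuous_intros)+
qed

lemma Schwarz_Pick_derivative_annulus:
  fixes f :: "complex \<Rightarrow> complex"
  assumes r: "0 \<le> r" and holf: "f holomorphic_on annulus r"
    and bound: "\<And>z. z \<in> annulus r \<Longrightarrow> norm (f z) \<le> M"
    and w: "w \<in> annulus r" and F: "(f has_field_derivative F) (at w)"
  shows "norm F * ((1 - (cmod w)\<^sup>2) * ((cmod w)\<^sup>2 - r\<^sup>2)) * M \<le> M\<^sup>2 - (norm (f w))\<^sup>2"
proof -
  \<comment> \<open>The disc of radius \<open>(1 - r)/2\<close> centred where the ray through \<open>w\<close> meets \<open>|z| = (1 + r)/2\<close>.\<close>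
  define s where "s = cmod w"
  define m where "m = (1 + r) / 2"
  define \<rho> where "\<rho> = (1 - r) / 2"
  define c where "c = of_real (m / s) * w"
  have s: "r < s" "s < 1" using w by (auto simp: annulus_def s_def)
  have \<rho>: "0 < \<rho>" and two_\<rho>: "2 * \<rho> = 1 - r" using s r by (simp_all add: \<rho>_def)
  have "norm c = \<bar>m / s\<bar> * s" by (simp only: c_def norm_mult norm_of_real s_def)
  then have norm_c: "norm c = m" using s r by (simp add: m_def)
  have dist_cw: "dist c w = \<bar>s - m\<bar>"
  proof -
    have "w - c = of_real (1 - m / s) * w" by (simp add: c_def algebra_simps)
    then have "dist c w = \<bar>1 - m / s\<bar> * \<bar>s\<bar>"
      by (simp only: dist_norm norm_minus_commute[of c] norm_mult norm_of_real s_def abs_norm_cancel)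
    also have "\<dots> = \<bar>(1 - m / s) * s\<bar>" by (simp only: abs_mult)
    also have "(1 - m / s) * s = s - m" using s r by (simp add: field_simps)
    finally show ?thesis .
  qed
  have "ball c \<rho> \<subseteq> annulus r"
  proof
    fix z assume "z \<in> ball c \<rho>"
    then have "norm (z - c) < \<rho>" by (simp add: dist_norm norm_minus_commute)
    moreover have "norm c - norm (z - c) \<le> norm z" "norm z \<le> norm c + norm (z - c)"
      using norm_triangle_ineq2[of c "c - z"] norm_triangle_ineq[of c "z - c"]
      by (simp_all add: norm_minus_commute)
    ultimately show "z \<in> annulus r" unfolding annulus_def mem_Collect_eq norm_c m_def \<rho>_def by (intro conjI) argo+
  qed
  moreover have w_ball: "w \<in> ball c \<rho>"
    using s by (simp add: dist_cw m_def \<rho>_def abs_less_iff field_simps)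
  ultimately have Schwarz_Pick: "norm F * (\<rho>\<^sup>2 - (dist c w)\<^sup>2) * M \<le> \<rho> * (M\<^sup>2 - (norm (f w))\<^sup>2)"
    using bound by (intro Schwarz_Pick_derivative_ball[OF _ _ _ F] holomorphic_on_subset[OF holf]) auto
  have "(1 - s\<^sup>2) * (s\<^sup>2 - r\<^sup>2) * \<rho> \<le> \<rho>\<^sup>2 - (dist c w)\<^sup>2"
  proof -
    have "(1 + s) * (s + r) * (1 - r) \<le> 2 * (1 + r) * (1 - r)"
      using s r by (intro mult_right_mono mult_mono) auto
    also have "\<dots> \<le> 2" by (simp add: algebra_simps)
    finally have "(1 - s) * (s - r) * ((1 + s) * (s + r) * (1 - r)) \<le> (1 - s) * (s - r) * 2"
      using s by (intro mult_left_mono) auto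
    moreover have "(1 - s) * (s - r) * ((1 + s) * (s + r) * (1 - r)) = (1 - s\<^sup>2) * (s\<^sup>2 - r\<^sup>2) * (2 * \<rho>)"
      unfolding two_\<rho> by (simp add: power2_eq_square algebra_simps)
    moreover have "\<rho>\<^sup>2 - (dist c w)\<^sup>2 = ((\<rho> + m) - s) * (s + (\<rho> - m))"
      by (simp add: dist_cw power2_eq_square algebra_simps)
    moreover have "\<rho> + m = 1" "\<rho> - m = - r" by (simp_all add: m_def \<rho>_def field_simps)
    ultimately show ?thesis by simp
  qed
  moreover have "0 \<le> norm F * M"
    using bound[OF w] by (meson mult_nonneg_nonneg norm_ge_zero order_trans)
  ultimately have "(norm F * M) * ((1 - s\<^sup>2) * (s\<^sup>2 - r\<^sup>2) * \<rho>) \<le> (norm F * M) * (\<rho>\<^sup>2 - (dist c w)\<^sup>2)"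
    by (rule mult_left_mono)
  then have "\<rho> * (norm F * ((1 - s\<^sup>2) * (s\<^sup>2 - r\<^sup>2)) * M) \<le> norm F * (\<rho>\<^sup>2 - (dist c w)\<^sup>2) * M"
    by (simp only: ac_simps)
  with Schwarz_Pick have "\<rho> * (norm F * ((1 - s\<^sup>2) * (s\<^sup>2 - r\<^sup>2)) * M) \<le> \<rho> * (M\<^sup>2 - (norm (f w))\<^sup>2)"
    by linarith
  then show ?thesis using \<rho> by (simp add: s_def)
qed

definition utri :: "complex \<Rightarrow> complex \<Rightarrow> complex^2^2" where
  "utri a b = (\<chi> i j. if i = j then a else if i = 1 \<and> j = 2 then b else 0)"

lemma utri_nth [simp]:
  "utri a b $ 1 $ 1 = a" "utri a b $ 1 $ 2 = b" "utri a b $ 2 $ 1 = 0" "utri a b $ 2 $ 2 = a"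
  by (simp_all add: utri_def)

lemma matrix2_eq_iff:
  "(A :: 'a^2^2) = B \<longleftrightarrow> A$1$1 = B$1$1 \<and> A$1$2 = B$1$2 \<and> A$2$1 = B$2$1 \<and> A$2$2 = B$2$2"
  by (auto simp: vec_eq_iff forall_2)

lemma utri_mult: "utri a b ** utri c d = utri (a * c) (a * d + b * c)"
  by (simp add: matrix2_eq_iff matrix_matrix_mult_def sum_2)

lemma mat_eq_utri: "(mat k :: complex^2^2) = utri k 0"
  by (simp add: matrix2_eq_iff mat_def)

lemma sum_utri: "(\<Sum>i\<in>S. utri (f i) (g i)) = utri (sum f S) (sum g S)"
  by (simp add: matrix2_eq_iff sum_component)

lemma utri_diff: "utri a b - utri c d = utri (a - c) (b - d)"
  by (simp add: matrix2_eq_iff)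

lemma Tw_eq_utri: "Tw r w = utri w (of_real ((1 - (cmod w)\<^sup>2) * ((cmod w)\<^sup>2 - r\<^sup>2)))"
  by (simp add: matrix2_eq_iff Tw_def)

lemma mpow_utri: "mpow (utri w b) i = utri (w ^ i) (b * of_nat i * w ^ (i - 1))"
proof (induction i)
  case 0
  then show ?case by (simp add: mat_eq_utri)
next
  case (Suc i)
  then show ?case by (cases i) (simp_all add: utri_mult algebra_simps)
qed

lemma poly_mat_utri: "poly_mat p (utri w b) = utri (poly p w) (b * poly (pderiv p) w)"
proof -
  have "poly_mat p (utri w b)
      = (\<Sum>i\<le>degree p. utri (coeff p i * w ^ i) (b * (coeff p i * (of_nat i * w ^ (i - 1)))))"
    unfolding poly_mat_def mpow_utri mat_eq_utri utri_mult by (intro sum.cong refl) (simp add: mult_ac)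
  also have "\<dots> = utri (poly p w) (b * poly (pderiv p) w)"
    by (simp only: sum_utri poly_pderiv_eq_sum poly_altdef[of p] sum_distrib_left)
  finally show ?thesis .
qed

lemma matrix_inv_utri:
  assumes "a \<noteq> 0"
  shows "matrix_inv (utri a b) = utri (1 / a) (- b / a\<^sup>2)"
proof -
  have right: "utri a b ** utri (1 / a) (- b / a\<^sup>2) = mat 1"
    and left: "utri (1 / a) (- b / a\<^sup>2) ** utri a b = mat 1"
    using assms by (simp_all add: utri_mult mat_eq_utri power2_eq_square field_simps)
  have uniq: "X = utri (1 / a) (- b / a\<^sup>2)" if "utri a b ** X = mat 1" for X
  proof -
    have "X = (utri (1 / a) (- b / a\<^sup>2) ** utri a b) ** X"
      unfolding left by (rule matrix_mul_lid[symmetric])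
    also have "\<dots> = utri (1 / a) (- b / a\<^sup>2) ** (utri a b ** X)"
      by (rule matrix_mul_assoc[symmetric])
    also have "\<dots> = utri (1 / a) (- b / a\<^sup>2)"
      unfolding that by (rule matrix_mul_rid)
    finally show ?thesis .
  qed
  show ?thesis
    unfolding matrix_inv_def by (rule some_equality) (use right left uniq in blast)+
qed

lemma mspectrum_utri: "mspectrum (utri w b) \<subseteq> {w}"
  by (auto simp: mspectrum_def mat_eq_utri utri_diff invertible_det_nz det_2)

lemma upper_triangular_sum_squares_le:
  fixes \<alpha> \<beta> M x y :: real
  assumes "0 \<le> \<alpha>" "0 \<le> \<beta>" "0 \<le> x" "0 \<le> y" "\<alpha> \<le> M" "\<beta> * M \<le> M\<^sup>2 - \<alpha>\<^sup>2" "0 < M \<or> \<beta> = 0"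
  shows "(\<alpha> * x + \<beta> * y)\<^sup>2 + (\<alpha> * y)\<^sup>2 \<le> M\<^sup>2 * (x\<^sup>2 + y\<^sup>2)"
proof (cases "\<beta> = 0")
  case True
  have "\<alpha>\<^sup>2 \<le> M\<^sup>2" using assms by (simp add: power_mono)
  then show ?thesis
    using True by (simp add: power_mult_distrib distrib_left add_mono mult_right_mono)
next
  case False
  then have M: "0 < M" using assms by auto
  define d where "d = M\<^sup>2 - \<alpha>\<^sup>2"
  have "0 < \<beta> * M" using False assms M by simp
  then have d: "0 < d" "(\<beta> * M)\<^sup>2 \<le> d\<^sup>2" using assms by (simp_all add: d_def power_mono)
  have "d * (M\<^sup>2 * (x\<^sup>2 + y\<^sup>2) - ((\<alpha> * x + \<beta> * y)\<^sup>2 + (\<alpha> * y)\<^sup>2))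
      = (d * x - \<alpha> * \<beta> * y)\<^sup>2 + (d\<^sup>2 - (\<beta> * M)\<^sup>2) * y\<^sup>2"
    unfolding d_def power2_eq_square by (simp add: algebra_simps)
  also have "\<dots> \<ge> 0" using d by simp
  finally show ?thesis using d by (simp add: zero_le_mult_iff)
qed

lemma norm_vec2: "norm (v :: complex^2) = sqrt ((norm (v$1))\<^sup>2 + (norm (v$2))\<^sup>2)"
  by (simp add: norm_vec_def L2_set_def sum_2)

lemma op_norm_utri_le:
  assumes "norm a \<le> M" "norm b * M \<le> M\<^sup>2 - (norm a)\<^sup>2" "0 < M \<or> b = 0"
  shows "op_norm (utri a b) \<le> M"
  unfolding op_norm_def
proof (rule onorm_le)
  fix x :: "complex^2"
  have M: "0 \<le> M" using assms(1) norm_ge_zero order_trans by blast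
  have "norm (a * x$1 + b * x$2) \<le> norm a * norm (x$1) + norm b * norm (x$2)"
    by (metis norm_mult norm_triangle_ineq)
  then have "(norm (a * x$1 + b * x$2))\<^sup>2 \<le> (norm a * norm (x$1) + norm b * norm (x$2))\<^sup>2"
    by (simp add: power_mono)
  moreover have "(norm a * norm (x$1) + norm b * norm (x$2))\<^sup>2 + (norm a * norm (x$2))\<^sup>2
      \<le> M\<^sup>2 * ((norm (x$1))\<^sup>2 + (norm (x$2))\<^sup>2)"
    by (rule upper_triangular_sum_squares_le) (use assms in auto)
  ultimately have "(norm (a * x$1 + b * x$2))\<^sup>2 + (norm (a * x$2))\<^sup>2 \<le> M\<^sup>2 * ((norm (x$1))\<^sup>2 + (norm (x$2))\<^sup>2)"
    by (simp only: norm_mult power_mult_distrib)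
  then have "norm (utri a b *v x) \<le> sqrt (M\<^sup>2 * ((norm (x$1))\<^sup>2 + (norm (x$2))\<^sup>2))"
    by (simp add: norm_vec2 matrix_vector_mult_def sum_2)
  also have "\<dots> = M * norm x"
    using M by (simp add: norm_vec2 real_sqrt_mult)
  finally show "norm (utri a b *v x) \<le> M * norm x" .
qed

lemma compact_cl_annulus: "compact (cl_annulus r)"
proof -
  have "cl_annulus r = cball 0 1 - ball 0 r" by (auto simp: cl_annulus_def)
  then show ?thesis by (simp add: compact_diff)
qed

lemma infinite_cl_annulus:
  assumes "0 \<le> r" "r < 1"
  shows "infinite (cl_annulus r)"
proof
  assume "finite (cl_annulus r)"
  moreover have "complex_of_real ` {r..1} \<subseteq> cl_annulus r" using assms by (auto simp: cl_annulus_def)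
  ultimately have "finite (complex_of_real ` {r..1})" by (rule finite_subset[rotated])
  then have "finite {r..1}" by (rule finite_imageD) (simp add: inj_on_def)
  with infinite_Icc[OF assms(2)] show False by simp
qed

lemma annulus_subset_cl_annulus: "annulus r \<subseteq> cl_annulus r"
  by (auto simp: annulus_def cl_annulus_def)

lemma Schwarz_Pick_derivative_cl_annulus:
  fixes f :: "complex \<Rightarrow> complex"
  assumes r: "0 \<le> r" and holf: "f holomorphic_on annulus r"
    and bound: "\<And>z. z \<in> cl_annulus r \<Longrightarrow> norm (f z) \<le> M"
    and w: "w \<in> cl_annulus r" and F: "(f has_field_derivative F) (at w)"
  shows "norm F * ((1 - (cmod w)\<^sup>2) * ((cmod w)\<^sup>2 - r\<^sup>2)) * M \<le> M\<^sup>2 - (norm (f w))\<^sup>2"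
proof (cases "w \<in> annulus r")
  case True
  then show ?thesis
    using annulus_subset_cl_annulus bound by (intro Schwarz_Pick_derivative_annulus[OF r holf _ True F]) auto
next
  case False
  with w have weight: "(1 - (cmod w)\<^sup>2) * ((cmod w)\<^sup>2 - r\<^sup>2) = 0"
    by (auto simp: annulus_def cl_annulus_def)
  show ?thesis unfolding weight using bound[OF w] by (simp add: power_mono)
qed

lemma poly_mat_div_utri:
  assumes "poly q w \<noteq> 0"
  shows "poly_mat p (utri w b) ** matrix_inv (poly_mat q (utri w b))
    = utri (poly p w / poly q w)
        (b * ((poly (pderiv p) w * poly q w - poly p w * poly (pderiv q) w) / (poly q w)\<^sup>2))"
  using assms by (simp add: poly_mat_utri matrix_inv_utri utri_mult power2_eq_square field_simps)

lemma annulus_contraction_Tw: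
  assumes r: "0 < r" "r < 1" and w: "w \<in> cl_annulus r"
  shows "annulus_contraction r (Tw r w)"
  unfolding annulus_contraction_def
proof (intro conjI allI impI)
  define c where "c = (1 - (cmod w)\<^sup>2) * ((cmod w)\<^sup>2 - r\<^sup>2)"
  have T: "Tw r w = utri w (of_real c)" by (simp add: Tw_eq_utri c_def)
  show "mspectrum (Tw r w) \<subseteq> cl_annulus r" using mspectrum_utri w T by auto
  fix p q :: "complex poly"
  assume q: "\<forall>z\<in>cl_annulus r. poly q z \<noteq> 0"
  define f where "f z = poly p z / poly q z" for z
  define M where "M = (SUP z\<in>cl_annulus r. cmod (f z))"
  define F where "F = (poly (pderiv p) w * poly q w - poly p w * poly (pderiv q) w) / (poly q w)\<^sup>2"
  have qw: "poly q w \<noteq> 0" using q w by blast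
  have "bdd_above ((\<lambda>z. cmod (f z)) ` cl_annulus r)"
    using q by (intro bounded_imp_bdd_above compact_imp_bounded compact_continuous_image
        compact_cl_annulus) (auto simp: f_def intro!: continuous_intros)
  then have le_M: "norm (f z) \<le> M" if "z \<in> cl_annulus r" for z
    unfolding M_def using that by (rule cSUP_upper2) simp
  have "f holomorphic_on annulus r"
    unfolding f_def[abs_def] using q annulus_subset_cl_annulus by (intro holomorphic_intros) auto
  moreover have "(f has_field_derivative F) (at w)"
    unfolding f_def[abs_def] F_def using DERIV_divide[OF poly_DERIV poly_DERIV qw]
    by (simp add: power2_eq_square)
  ultimately have "norm F * c * M \<le> M\<^sup>2 - (norm (f w))\<^sup>2"
    unfolding c_def using r le_M w by (intro Schwarz_Pick_derivative_cl_annulus) auto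
  moreover have "0 \<le> c"
    using w r unfolding c_def cl_annulus_def
    by (auto intro!: mult_nonneg_nonneg simp: power_le_one abs_square_le_1 power_mono)
  ultimately have estimate: "norm (of_real c * F) * M \<le> M\<^sup>2 - (norm (f w))\<^sup>2"
    by (simp add: norm_mult mult_ac)
  have "0 < M \<or> of_real c * F = 0"
  proof (cases "p = 0")
    case True
    then show ?thesis by (simp add: F_def)
  next
    case False
    have "\<not> cl_annulus r \<subseteq> {z. poly p z = 0}"
      using poly_roots_finite[OF False] infinite_cl_annulus r finite_subset by (metis less_le)
    then obtain z where "z \<in> cl_annulus r" "poly p z \<noteq> 0" by blast
    with q le_M have "0 < M" by (smt (verit) f_def divide_eq_0_iff zero_less_norm_iff)
    then show ?thesis by simp
  qed
  with estimate show "op_norm (poly_mat p (Tw r w) ** matrix_inv (poly_mat q (Tw r w)))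
      \<le> (SUP z\<in>cl_annulus r. cmod (poly p z / poly q z))"
    unfolding T poly_mat_div_utri[OF qw] f_def[symmetric] F_def[symmetric] M_def[symmetric]
    by (rule op_norm_utri_le[OF le_M[OF w]])
qed

lemma annulus_unitary_Tw:
  assumes "w \<in> bd_annulus r"
  shows "annulus_unitary r (Tw r w)"
proof -
  have "Tw r w = utri w 0" using assms by (auto simp: Tw_eq_utri bd_annulus_def)
  moreover have "madjoint (utri w 0) = utri (cnj w) 0" by (simp add: matrix2_eq_iff madjoint_def)
  ultimately show ?thesis
    unfolding annulus_unitary_def using mspectrum_utri[of w 0] assms by (auto simp: utri_mult mult.commute)
qed

lemma has_sum_two_sided_geometric:
  fixes x y :: real
  assumes x: "0 \<le> x" "x < 1" and y: "0 \<le> y" "y < 1"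
  shows "((\<lambda>n::int. if 0 \<le> n then x ^ nat n else y ^ nat (- n)) has_sum (1 / (1 - x) + y / (1 - y))) UNIV"
    (is "(?b has_sum _) _")
proof -
  have split: "(UNIV :: int set) = range int \<union> range (\<lambda>k. - int k - 1)"
  proof -
    have "n \<in> range int \<union> range (\<lambda>k. - int k - 1)" for n :: int
    proof (cases "0 \<le> n")
      case True
      then show ?thesis by (metis UnI1 nonneg_eq_int rangeI)
    next
      case False
      then have "n = - int (nat (- n - 1)) - 1" by simp
      then show ?thesis by blast
    qed
    then show ?thesis by blast
  qed
  have "((\<lambda>k::nat. x ^ k) has_sum 1 / (1 - x)) UNIV"
    by (rule sums_nonneg_imp_has_sum) (use geometric_sums[of x] x in simp_all)
  moreover have "?b \<circ> int = (\<lambda>k. x ^ k)" by auto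
  ultimately have nonneg: "(?b has_sum 1 / (1 - x)) (range int)"
    by (simp add: has_sum_reindex)
  have "(\<lambda>k. y * y ^ k) sums (y * (1 / (1 - y)))"
    by (intro sums_mult geometric_sums) (use y in simp)
  then have "((\<lambda>k::nat. y * y ^ k) has_sum y / (1 - y)) UNIV"
    by (intro sums_nonneg_imp_has_sum) (use y in simp_all)
  moreover have "?b \<circ> (\<lambda>k. - int k - 1) = (\<lambda>k. y * y ^ k)"
    by (auto simp: nat_add_distrib)
  moreover have "inj (\<lambda>k::nat. - int k - 1)" by (auto simp: inj_def)
  ultimately have neg: "(?b has_sum y / (1 - y)) (range (\<lambda>k. - int k - 1))"
    by (simp add: has_sum_reindex)
  show ?thesis
    unfolding split by (rule has_sum_Un_disjoint[OF nonneg neg]) auto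
qed

lemma annulus_kernel_term_le:
  fixes r s :: real and n :: int
  assumes r: "0 < r" "r < s"
  shows "s powi (2 * n) / (1 + r powi (2 * n)) \<le> (if 0 \<le> n then (s\<^sup>2) ^ nat n else (r\<^sup>2 / s\<^sup>2) ^ nat (- n))"
proof (cases "0 \<le> n")
  case True
  then obtain k where k: "n = int k" by (metis nonneg_eq_int)
  have "s powi (2 * n) / (1 + r powi (2 * n)) = (s\<^sup>2) ^ k / (1 + (r\<^sup>2) ^ k)"
    by (simp add: k power_int_mult power_mult flip: of_nat_mult)
  also have "\<dots> \<le> (s\<^sup>2) ^ k / 1"
    using add_pos_nonneg[of 1 "(r\<^sup>2) ^ k"] by (intro divide_left_mono) auto
  finally show ?thesis using True by (simp add: k)
next
  case False
  define k where "k = nat (- n)"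
  have "2 * n = - int (2 * k)" using False by (simp add: k_def)
  then have "s powi (2 * n) / (1 + r powi (2 * n)) = inverse ((s\<^sup>2) ^ k) / (1 + inverse ((r\<^sup>2) ^ k))"
    by (simp only: power_int_minus power_int_of_nat power_mult)
  also have "\<dots> = (r\<^sup>2) ^ k / ((s\<^sup>2) ^ k * ((r\<^sup>2) ^ k + 1))"
    using r by (simp add: field_simps)
  also have "\<dots> \<le> (r\<^sup>2) ^ k / ((s\<^sup>2) ^ k * 1)"
    using r add_pos_nonneg[of 1 "(r\<^sup>2) ^ k"] by (intro divide_left_mono mult_left_mono mult_pos_pos) auto
  finally show ?thesis using False by (simp add: k_def power_divide)
qed

lemma annulus_kernel_diagonal_le:
  assumes r: "0 < r" and w: "w \<in> annulus r"
  shows "(\<lambda>n::int. (cmod w) powi (2*n) / (1 + r powi (2*n))) summable_on UNIV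
    \<and> (\<Sum>\<^sub>\<infinity>n::int. (cmod w) powi (2*n) / (1 + r powi (2*n)))
        \<le> 1 / ((1 - (cmod w)\<^sup>2) * ((cmod w)\<^sup>2 - r\<^sup>2))"
    (is "?a summable_on _ \<and> _")
proof -
  define x where "x = (cmod w)\<^sup>2"
  define y where "y = r\<^sup>2 / x"
  have s: "r < cmod w" "cmod w < 1" using w by (auto simp: annulus_def)
  have x: "r\<^sup>2 < x" "x < 1" using s r unfolding x_def by (auto intro: power_strict_mono simp: power_less_one_iff)
  have x0: "0 < x" using x(1) r by (smt (verit) zero_less_power)
  then have y: "0 < y" "y < 1" using x r by (simp_all add: y_def)
  define b where "b n = (if 0 \<le> n then x ^ nat n else y ^ nat (- n))" for n :: int
  define S where "S = 1 / (1 - x) + y / (1 - y)"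
  have b: "(b has_sum S) UNIV"
    unfolding b_def[abs_def] S_def using x x0 y by (intro has_sum_two_sided_geometric) auto
  have a_le_b: "?a n \<le> b n" for n
    unfolding b_def x_def y_def by (rule annulus_kernel_term_le[OF r s(1)])
  have b_summable: "b summable_on UNIV" using b summable_on_def by blast
  have a_summable: "?a summable_on UNIV"
    by (rule abs_summable_summable, rule Infinite_Sum.abs_summable_on_comparison_test'[OF b_summable])
      (use a_le_b r in simp)
  have "infsum ?a UNIV \<le> infsum b UNIV" by (rule infsum_mono[OF a_summable b_summable a_le_b])
  also have "infsum b UNIV = S" using b by (rule infsumI)
  also have "S = x * (1 - r\<^sup>2) / ((1 - x) * (x - r\<^sup>2))"
    using x x0 by (simp add: S_def y_def field_simps)
  also have "\<dots> \<le> 1 / ((1 - x) * (x - r\<^sup>2))"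
    using x x0 r by (intro divide_right_mono mult_le_one) auto
  finally show ?thesis using a_summable by (simp add: x_def)
qed

theorem mainTheorem14:
  fixes r :: real
  assumes "0 < r" "r < 1"
  shows "(\<forall>w\<in>cl_annulus r. annulus_contraction r (Tw r w))
    \<and> (\<forall>w\<in>bd_annulus r. annulus_unitary r (Tw r w))
    \<and> (\<forall>w\<in>annulus r.
          (\<lambda>n::int. (cmod w) powi (2*n) / (1 + r powi (2*n))) summable_on UNIV
        \<and> (\<Sum>\<^sub>\<infinity>n::int. (cmod w) powi (2*n) / (1 + r powi (2*n)))
            \<le> 1 / ((1 - (cmod w)\<^sup>2) * ((cmod w)\<^sup>2 - r\<^sup>2)))"
  using annulus_contraction_Tw[OF assms] annulus_unitary_Tw annulus_kernel_diagonal_le[OF assms(1)]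
  by blast
end
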